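(* Let $0<p<1/2$ and let $m$ be a bounded generating sequence. There is a constant $c<\infty$ (depending only on $p$ and $m$) such that for every $N\in\mathbb{N}$ and every bounded measurable function $a$ on $G_m$ with $\operatorname{supp}a\subset I_N$, $\int_{I_N}a\,d\mu=0$ and $\|a\|_\infty\le M_N^{1/p}$ (i.e. a $p$-atom supported on $I_N$), one has $$\int_{G_m\setminus I_N}\Big(\sup_{n\in\mathbb{N}_+}\frac{|\sigma_na|}{(n+1)^{1/p-2}}\Big)^p d\mu\le c.$$
   Context: Let $m=(m_0,m_1,\dots)$ be a sequence of integers $m_k\ge 2$ with $\sup_k m_k<\infty$. $G_m=\prod_k Z_{m_k}$ (where $Z_{m_k}=\{0,\dots,m_k-1\}$ is the group of integers mod $m_k$), elements $x=(x_0,x_1,\dots)$, normalized Haar measure $\mu$ (product of uniform measures $\mu_k(\{j\})=1/m_k$). $M_0=1$, $M_{k+1}=m_kM_k$; every $n\in\mathbb{N}$ is uniquely $n=\sum_jn_jM_j$, $n_j\in Z_{m_j}$. $I_N=\{y\in G_m: y_0=\dots=y_{N-1}=0\}$, so $\mu(I_N)=M_N^{-1}$. $r_k(x)=\exp(2\pi ix_k/m_k)$, $\psi_n=\prod_kr_k^{n_k}$. For integrable $f$: $\widehat f(n)=\int_{G_m}f\overline{\psi_n}\,d\mu$, $S_nf=\sum_{k=0}^{n-1}\widehat f(k)\psi_k$ ($S_0f=0$), $\sigma_nf=\frac1n\sum_{k=0}^{n-1}S_kf$ for $n\ge1$. *)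

theory Defs
  imports "HOL-Probability.Probability"
begin

definition Gm_measure :: "(nat \<Rightarrow> nat) \<Rightarrow> (nat \<Rightarrow> nat) measure" where
  "Gm_measure m = (\<Pi>\<^sub>M k\<in>UNIV. uniform_count_measure {..<m k})"

definition Mseq :: "(nat \<Rightarrow> nat) \<Rightarrow> nat \<Rightarrow> nat" where
  "Mseq m k = (\<Prod>j<k. m j)"

definition I_set :: "(nat \<Rightarrow> nat) \<Rightarrow> nat \<Rightarrow> (nat \<Rightarrow> nat) set" where
  "I_set m N = {y \<in> space (Gm_measure m). \<forall>j<N. y j = 0}"

text \<open>j-th digit of n in the mixed radix expansion n = sum n_j M_j.\<close>
definition digit :: "(nat \<Rightarrow> nat) \<Rightarrow> nat \<Rightarrow> nat \<Rightarrow> nat" where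
  "digit m n j = n div Mseq m j mod m j"

definition rademacher :: "(nat \<Rightarrow> nat) \<Rightarrow> nat \<Rightarrow> (nat \<Rightarrow> nat) \<Rightarrow> complex" where
  "rademacher m k x = cis (2 * pi * real (x k) / real (m k))"

text \<open>psi_n = prod_k r_k^{n_k}; only finitely many digits are nonzero
  (all digits with index j >= n vanish since M_j >= 2^j > n).\<close>
definition psi :: "(nat \<Rightarrow> nat) \<Rightarrow> nat \<Rightarrow> (nat \<Rightarrow> nat) \<Rightarrow> complex" where
  "psi m n x = (\<Prod>j\<in>{j. digit m n j \<noteq> 0}. rademacher m j x ^ digit m n j)"

definition fourier :: "(nat \<Rightarrow> nat) \<Rightarrow> ((nat \<Rightarrow> nat) \<Rightarrow> complex) \<Rightarrow> nat \<Rightarrow> complex" where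
  "fourier m f n = (\<integral>x. f x * cnj (psi m n x) \<partial>Gm_measure m)"

definition partial_sum :: "(nat \<Rightarrow> nat) \<Rightarrow> ((nat \<Rightarrow> nat) \<Rightarrow> complex) \<Rightarrow> nat \<Rightarrow> (nat \<Rightarrow> nat) \<Rightarrow> complex" where
  "partial_sum m f n x = (\<Sum>k<n. fourier m f k * psi m k x)"

definition fejer :: "(nat \<Rightarrow> nat) \<Rightarrow> ((nat \<Rightarrow> nat) \<Rightarrow> complex) \<Rightarrow> nat \<Rightarrow> (nat \<Rightarrow> nat) \<Rightarrow> complex" where
  "fejer m f n x = (\<Sum>k<n. partial_sum m f k x) / of_nat n"

definition ennpowr :: "ennreal \<Rightarrow> real \<Rightarrow> ennreal" where
  "ennpowr t p = (if t = \<infinity> then \<infinity> else ennreal (enn2real t powr p))"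

end

theory Submission
  imports Defs
begin

(* Each x outside I_N lies in a cylinder E(s,t): s < N is its first nonzero coordinate and
   t <= N the next one (t = N if there is none below N); E(s,t) has measure m_s / M_t.
   The atom's Fourier coefficients are constant on the blocks [q M_N, (q+1) M_N), vanish on
   the first block and are at most M_N^(1/p-1), so S_k a(x) = beta_q D_r(x) for k = q M_N + r.
   The characters are multiplicative along the mixed radix expansion, which makes D_(M_t)(x)
   vanish and bounds |sum_(r<R) D_r(x)| by (B+1) M_(s+1) M_t for R <= M_N (B bounds m).
   Hence sup_n |sigma_n a(x)| / (n+1)^(1/p-2) <= 2 (B+1) M_(s+1) M_t on E(s,t), so E(s,t)
   contributes at most (2(B+1))^p B r^t with r = 2^(2p-1) < 1, and summing over s < t <= N
   is bounded by the convergent series sum_t t r^t. *)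

lemma sum_lessThan_add: "(\<Sum>k<(a::nat) + b. f k) = (\<Sum>k<a. f k) + (\<Sum>r<b. f (a + r))"
  by (induction b) (simp_all add: add.assoc)

lemma sum_lessThan_blocks:
  "(\<Sum>k<(Q::nat) * K + R. f k) = (\<Sum>q<Q. \<Sum>r<K. f (q * K + r)) + (\<Sum>r<R. f (Q * K + r))"
proof -
  have "(\<Sum>k<Q * K. f k) = (\<Sum>q<Q. \<Sum>r<K. f (q * K + r))"
  proof (induction Q)
    case (Suc Q)
    have "(\<Sum>k<Suc Q * K. f k) = (\<Sum>k<Q * K + K. f k)" by (simp add: add.commute)
    then show ?case by (simp add: sum_lessThan_add Suc)
  qed simp
  then show ?thesis by (simp add: sum_lessThan_add)
qed

lemma sum_lessThan_div_mod:
  fixes n K :: nat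
  shows "(\<Sum>k<n. f k) = (\<Sum>q<n div K. \<Sum>r<K. f (q * K + r)) + (\<Sum>r<n mod K. f (n div K * K + r))"
  using sum_lessThan_blocks[of f "n div K" K "n mod K"] by simp

text \<open>If \<open>f\<close> factors over blocks of length \<open>K\<close> through a function \<open>g\<close> with vanishing sum,
  all complete blocks cancel, so partial sums of a unimodular \<open>f\<close> are bounded by \<open>K\<close>.\<close>

lemma block_cancelling_sum_bound:
  fixes f g :: "nat \<Rightarrow> complex"
  assumes K: "0 < K" and factor: "\<And>w b. b < K \<Longrightarrow> f (w * K + b) = f (w * K) * g b"
    and g_sum: "(\<Sum>b<K. g b) = 0" and f_bound: "\<And>u. norm (f u) \<le> 1"
  shows "norm (\<Sum>u<V. f u) \<le> K"
proof -
  define Q R where "Q = V div K" and "R = V mod K"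
  have "(\<Sum>u<V. f u) = (\<Sum>q<Q. f (q * K) * (\<Sum>r<K. g r)) + (\<Sum>r<R. f (Q * K + r))"
    unfolding Q_def R_def sum_lessThan_div_mod[of f V K] by (simp add: factor sum_distrib_left)
  also have "\<dots> = (\<Sum>r<R. f (Q * K + r))" by (simp add: g_sum)
  also have "norm \<dots> \<le> (\<Sum>r<R. norm (f (Q * K + r)))" by (rule norm_sum)
  also have "\<dots> \<le> (\<Sum>r<R. 1)" by (intro sum_mono f_bound)
  also have "\<dots> \<le> K" using K by (simp add: R_def)
  finally show ?thesis .
qed

text \<open>The series \<open>\<Sum> n r^n\<close> converges for \<open>0 \<le> r < 1\<close>: it is dominated by the derivative
  of the geometric series.\<close>

lemma summable_times_geometric:
  fixes r :: real assumes "0 \<le> r" "r < 1"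
  shows "summable (\<lambda>n. real n * r ^ n)"
proof -
  have "summable (\<lambda>n. diffs (\<lambda>_. 1::real) n * r ^ n)"
    by (rule termdiff_converges[where K = 1]) (use assms in auto)
  then have "summable (\<lambda>n. real (Suc n) * r ^ n)" by (simp add: diffs_def)
  then show ?thesis
    by (rule summable_comparison_test'[where N = 0]) (use assms in \<open>auto intro!: mult_right_mono\<close>)
qed

lemma ennpowr_le:
  assumes "S \<le> ennreal c" "0 \<le> c" "0 < p"
  shows "ennpowr S p \<le> ennreal (c powr p)"
proof -
  have "S \<noteq> \<infinity>" using assms(1) by (auto simp: top_unique)
  moreover have "enn2real S \<le> c" by (rule enn2real_leI[OF assms(2,1)])
  ultimately show ?thesis unfolding ennpowr_def
    using assms by (auto intro!: ennreal_leI powr_mono2)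
qed

section \<open>Mixed radix digits and the Vilenkin characters\<close>

locale vilenkin =
  fixes m :: "nat \<Rightarrow> nat"
  assumes m_ge_2: "\<And>k. 2 \<le> m k"
begin

lemma m_pos: "0 < m k"
  using m_ge_2[of k] by linarith

lemma Mseq_0 [simp]: "Mseq m 0 = 1"
  by (simp add: Mseq_def)

lemma Mseq_Suc: "Mseq m (Suc k) = m k * Mseq m k"
  by (simp add: Mseq_def)

lemma Mseq_pos: "0 < Mseq m k"
  unfolding Mseq_def by (rule prod_pos) (simp add: m_pos)

lemma Mseq_dvd: "i \<le> j \<Longrightarrow> Mseq m i dvd Mseq m j"
  by (induction j) (auto simp: Mseq_Suc le_Suc_eq)

lemma Mseq_mono: "i \<le> j \<Longrightarrow> Mseq m i \<le> Mseq m j"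
  by (metis Mseq_dvd Mseq_pos dvd_imp_le)

lemma two_pow_le_Mseq: "2 ^ k \<le> Mseq m k"
proof (induction k)
  case (Suc k)
  then show ?case using mult_le_mono[OF m_ge_2[of k] Suc.IH] by (simp add: Mseq_Suc)
qed simp

lemma less_Mseq: "k < Mseq m k"
  using two_pow_le_Mseq[of k] less_exp[of k] by linarith

lemma digit_eq_mod_div: "digit m n i = n mod Mseq m (Suc i) div Mseq m i"
proof -
  have "n mod (Mseq m i * m i) = Mseq m i * (n div Mseq m i mod m i) + n mod Mseq m i"
    by (rule mod_mult2_eq)
  then show ?thesis
    using Mseq_pos[of i] by (simp add: digit_def Mseq_Suc mult.commute)
qed

lemma digit_eq_0: "n < Mseq m i \<Longrightarrow> digit m n i = 0"
  by (simp add: digit_def)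

lemma digit_low:
  assumes "i < N" shows "digit m (q * Mseq m N + r) i = digit m r i"
proof -
  have "Mseq m (Suc i) dvd Mseq m N" using assms by (simp add: Mseq_dvd)
  then have "(q * Mseq m N + r) mod Mseq m (Suc i) = r mod Mseq m (Suc i)"
    by (metis mod_mult_self3 dvd_mult2 dvd_imp_mod_0 mod_add_left_eq add.left_neutral mult.commute)
  then show ?thesis by (simp add: digit_eq_mod_div)
qed

lemma digit_high:
  assumes "N \<le> i" "r < Mseq m N"
  shows "digit m (q * Mseq m N + r) i = digit m (q * Mseq m N) i"
proof -
  obtain P where P: "Mseq m i = Mseq m N * P"
    using Mseq_dvd[OF assms(1)] by (auto elim: dvdE)
  have "(q * Mseq m N + r) div Mseq m i = q div P" "(q * Mseq m N) div Mseq m i = q div P"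
    unfolding P div_mult2_eq using Mseq_pos[of N] assms(2) by simp_all
  then show ?thesis by (simp add: digit_def)
qed

lemma digit_add:
  assumes "r < Mseq m N"
  shows "digit m (q * Mseq m N + r) i = digit m (q * Mseq m N) i + digit m r i"
proof (cases "i < N")
  case True
  then show ?thesis using digit_low[OF True, of q 0] digit_low[OF True] by (simp add: digit_def)
next
  case False
  then have "digit m r i = 0" using digit_eq_0 assms Mseq_mono[of N i] by simp
  then show ?thesis using digit_high[OF _ assms] False by simp
qed

lemma psi_eq_prod:
  assumes "n < Mseq m K"
  shows "psi m n x = (\<Prod>j<K. rademacher m j x ^ digit m n j)"
proof -
  have "{j. digit m n j \<noteq> 0} \<subseteq> {..<K}"
  proof
    fix j assume "j \<in> {j. digit m n j \<noteq> 0}"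
    then show "j \<in> {..<K}"
      using digit_eq_0[of n j] assms Mseq_mono[of K j] by (cases "K \<le> j") auto
  qed
  then show ?thesis unfolding psi_def
    by (intro prod.mono_neutral_left) auto
qed

lemma psi_add:
  assumes "r < Mseq m N"
  shows "psi m (q * Mseq m N + r) x = psi m (q * Mseq m N) x * psi m r x"
proof -
  define K where "K = q * Mseq m N + r + N"
  have K: "q * Mseq m N + r < Mseq m K" using less_Mseq[of K] by (simp add: K_def)
  then have K': "q * Mseq m N < Mseq m K" "r < Mseq m K" by auto
  show ?thesis
    unfolding psi_eq_prod[OF K] psi_eq_prod[OF K'(1)] psi_eq_prod[OF K'(2)]
    by (simp add: digit_add[OF assms] power_add prod.distrib)
qed

lemma psi_digit:
  assumes "b < m K"
  shows "psi m (b * Mseq m K) x = rademacher m K x ^ b"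
proof -
  have lt: "b * Mseq m K < Mseq m (Suc K)"
    using assms Mseq_pos[of K] by (simp add: Mseq_Suc)
  have "digit m (b * Mseq m K) K = b"
    using assms Mseq_pos[of K] by (simp add: digit_def)
  then show ?thesis
    unfolding psi_eq_prod[OF lt] using digit_low[of _ K _ 0] by (simp add: digit_def)
qed

lemma psi_eq_1:
  assumes "r < Mseq m N" and "\<forall>i<N. y i = 0"
  shows "psi m r y = 1"
  unfolding psi_eq_prod[OF assms(1)] using assms(2) by (simp add: rademacher_def)

lemma norm_psi: "norm (psi m n x) = 1"
  unfolding psi_def by (simp add: prod_norm[symmetric] norm_power rademacher_def)

lemma psi_0: "psi m 0 x = 1"
  by (simp add: psi_def digit_def)

section \<open>Dirichlet kernels and their sums\<close>

lemma rademacher_sum_0: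
  assumes "x K \<noteq> 0" "x K < m K"
  shows "(\<Sum>b<m K. rademacher m K x ^ b) = 0"
proof -
  define \<theta> where "\<theta> = 2 * pi * real (x K) / real (m K)"
  have mK: "0 < real (m K)" using m_pos[of K] by simp
  have angle: "real (m K) * \<theta> = 2 * pi * real (x K)" using mK by (simp add: \<theta>_def)
  have "rademacher m K x ^ m K = cis \<theta> ^ m K" by (simp add: rademacher_def \<theta>_def)
  also have "\<dots> = cis (2 * pi * real (x K))" by (simp only: Complex.DeMoivre angle)
  finally have period: "rademacher m K x ^ m K = 1" by simp
  have "rademacher m K x \<noteq> 1"
  proof
    assume "rademacher m K x = 1"
    then have "cos \<theta> = 1" unfolding rademacher_def \<theta>_def by (metis cis.sel(1) one_complex.sel(1))
    then obtain n :: int where n: "\<theta> = real_of_int n * 2 * pi" using cos_one_2pi_int by auto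
    have "real (x K) / real (m K) = \<theta> / (2 * pi)" by (simp add: \<theta>_def)
    also have "\<dots> = real_of_int n" using n by simp
    finally have "real (x K) / real (m K) = real_of_int n" .
    moreover have "0 < real (x K) / real (m K)" "real (x K) / real (m K) < 1"
      using assms mK by simp_all
    ultimately show False by simp
  qed
  then show ?thesis using geometric_sum[of "rademacher m K x" "m K"] period by simp
qed

text \<open>The Dirichlet kernel \<open>D_n = \<Sum>_(k<n) \<psi>_k\<close> and the sum \<open>\<Sum>_(r<R) D_r\<close> of Dirichlet
  kernels (which is \<open>R\<close> times the Fej\'er kernel \<open>K_R\<close>).\<close>

definition dirichlet :: "(nat \<Rightarrow> nat) \<Rightarrow> nat \<Rightarrow> complex" where
  "dirichlet x n = (\<Sum>k<n. psi m k x)"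

definition kernel_sum :: "(nat \<Rightarrow> nat) \<Rightarrow> nat \<Rightarrow> complex" where
  "kernel_sum x R = (\<Sum>r<R. dirichlet x r)"

text \<open>\<open>D_(M_K)\<close> is the product of the geometric sums of the first \<open>K\<close> coordinates, hence it
  vanishes as soon as one of these coordinates is nonzero.\<close>

lemma dirichlet_Mseq_prod:
  "dirichlet x (Mseq m K) = (\<Prod>i<K. \<Sum>b<m i. rademacher m i x ^ b)"
proof (induction K)
  case (Suc K)
  have "dirichlet x (Mseq m (Suc K)) = (\<Sum>b<m K. \<Sum>r<Mseq m K. psi m (b * Mseq m K + r) x)"
    using sum_lessThan_blocks[of _ "m K" "Mseq m K" 0]
    by (simp add: dirichlet_def Mseq_Suc)
  also have "\<dots> = (\<Sum>b<m K. rademacher m K x ^ b * dirichlet x (Mseq m K))"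
    by (simp add: dirichlet_def psi_add psi_digit sum_distrib_left)
  also have "\<dots> = (\<Sum>b<m K. rademacher m K x ^ b) * dirichlet x (Mseq m K)"
    by (simp add: sum_distrib_right)
  finally show ?case by (simp add: Suc mult.commute)
qed (simp add: dirichlet_def psi_0)

lemma dirichlet_Mseq_0:
  assumes "\<forall>i. x i < m i" "i < K" "x i \<noteq> 0"
  shows "dirichlet x (Mseq m K) = 0"
  unfolding dirichlet_Mseq_prod using assms rademacher_sum_0[of x i]
  by (metis (no_types, lifting) finite_lessThan lessThan_iff prod_zero_iff)

text \<open>If \<open>x_s \<noteq> 0\<close> then \<open>\<psi>_(w M_(s+1) + b) = \<psi>_(w M_(s+1)) \<psi>_b\<close> and \<open>D_(M_(s+1))(x) = 0\<close>,
  so every \<open>|D_r(x)|\<close> is at most \<open>M_(s+1)\<close>.\<close>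

lemma dirichlet_bound:
  assumes "\<forall>i. x i < m i" "x s \<noteq> 0"
  shows "norm (dirichlet x r) \<le> Mseq m (Suc s)"
  unfolding dirichlet_def
proof (rule block_cancelling_sum_bound)
  show "(\<Sum>b<Mseq m (Suc s). psi m b x) = 0"
    using dirichlet_Mseq_0[of x s "Suc s"] assms by (simp add: dirichlet_def)
qed (simp_all add: Mseq_pos psi_add norm_psi)

lemma kernel_sum_trivial_bound:
  assumes "\<forall>i. x i < m i" "x s \<noteq> 0"
  shows "norm (kernel_sum x R) \<le> R * Mseq m (Suc s)"
proof -
  have "norm (kernel_sum x R) \<le> (\<Sum>r<R. norm (dirichlet x r))"
    unfolding kernel_sum_def by (rule norm_sum)
  also have "\<dots> \<le> (\<Sum>r<R. real (Mseq m (Suc s)))"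
    by (intro sum_mono dirichlet_bound assms)
  finally show ?thesis by simp
qed

lemma dirichlet_shift:
  assumes "dirichlet x (Mseq m t) = 0" "v \<le> Mseq m t"
  shows "dirichlet x (u * Mseq m t + v) = psi m (u * Mseq m t) x * dirichlet x v"
proof -
  have "dirichlet x (u * Mseq m t + v)
      = (\<Sum>q<u. psi m (q * Mseq m t) x * dirichlet x (Mseq m t)) + (\<Sum>r<v. psi m (u * Mseq m t + r) x)"
    unfolding dirichlet_def sum_lessThan_blocks by (simp add: psi_add sum_distrib_left)
  also have "(\<Sum>r<v. psi m (u * Mseq m t + r) x) = psi m (u * Mseq m t) x * dirichlet x v"
    unfolding dirichlet_def sum_distrib_left using assms(2) by (intro sum.cong refl psi_add) simp
  finally show ?thesis using assms(1) by simp
qed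

lemma kernel_sum_shift:
  assumes "dirichlet x (Mseq m t) = 0" "U \<le> Mseq m t"
  shows "kernel_sum x (V * Mseq m t + U)
    = (\<Sum>u<V. psi m (u * Mseq m t) x) * kernel_sum x (Mseq m t) + psi m (V * Mseq m t) x * kernel_sum x U"
proof -
  have "kernel_sum x (V * Mseq m t + U)
      = (\<Sum>q<V. \<Sum>r<Mseq m t. dirichlet x (q * Mseq m t + r)) + (\<Sum>r<U. dirichlet x (V * Mseq m t + r))"
    unfolding kernel_sum_def by (rule sum_lessThan_blocks)
  also have "(\<Sum>q<V. \<Sum>r<Mseq m t. dirichlet x (q * Mseq m t + r))
      = (\<Sum>q<V. psi m (q * Mseq m t) x * kernel_sum x (Mseq m t))"
    unfolding kernel_sum_def sum_distrib_left by (intro sum.cong refl dirichlet_shift assms(1)) simp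
  also have "(\<Sum>r<U. dirichlet x (V * Mseq m t + r)) = psi m (V * Mseq m t) x * kernel_sum x U"
    unfolding kernel_sum_def sum_distrib_left using assms(2)
    by (intro sum.cong refl dirichlet_shift assms(1)) simp
  finally show ?thesis by (simp add: sum_distrib_right)
qed

lemma psi_multiples_sum_bound:
  assumes "\<forall>i. x i < m i" "x t \<noteq> 0"
  shows "norm (\<Sum>u<V. psi m (u * Mseq m t) x) \<le> m t"
proof (rule block_cancelling_sum_bound[where g = "\<lambda>b. psi m (b * Mseq m t) x"])
  fix w b assume b: "b < m t"
  have e1: "(w * m t + b) * Mseq m t = w * Mseq m (Suc t) + b * Mseq m t"
    and e2: "w * m t * Mseq m t = w * Mseq m (Suc t)"
    by (simp_all add: Mseq_Suc algebra_simps)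
  have "b * Mseq m t < Mseq m (Suc t)" using b Mseq_pos[of t] by (simp add: Mseq_Suc)
  then show "psi m ((w * m t + b) * Mseq m t) x = psi m (w * m t * Mseq m t) x * psi m (b * Mseq m t) x"
    unfolding e1 e2 by (rule psi_add)
next
  show "(\<Sum>b<m t. psi m (b * Mseq m t) x) = 0"
    using rademacher_sum_0[of x t] assms by (simp add: psi_digit)
qed (simp_all add: m_pos norm_psi)

lemma kernel_sum_bound:
  assumes x: "\<forall>i. x i < m i" and B: "\<forall>k. m k \<le> B"
    and st: "s < t" "t \<le> N" and xs: "x s \<noteq> 0" and xt: "t = N \<or> x t \<noteq> 0" and R: "R \<le> Mseq m N"
  shows "norm (kernel_sum x R) \<le> (real B + 1) * Mseq m (Suc s) * Mseq m t"
proof (cases "t = N")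
  case True
  have "norm (kernel_sum x R) \<le> R * Mseq m (Suc s)" by (rule kernel_sum_trivial_bound[OF x xs])
  also have "\<dots> \<le> Mseq m t * Mseq m (Suc s)"
    using R True mult_right_mono[of "real R" "real (Mseq m t)" "real (Mseq m (Suc s))"] by simp
  also have "\<dots> \<le> (real B + 1) * Mseq m (Suc s) * Mseq m t"
    by (simp add: algebra_simps)
  finally show ?thesis .
next
  case False
  with xt have xt: "x t \<noteq> 0" by simp
  define V U where "V = R div Mseq m t" and "U = R mod Mseq m t"
  have R_eq: "R = V * Mseq m t + U"
    using div_mult_mod_eq[of R "Mseq m t"] by (simp add: V_def U_def)
  have U: "U \<le> Mseq m t" using Mseq_pos[of t] by (simp add: U_def less_imp_le)
  have D0: "dirichlet x (Mseq m t) = 0" using dirichlet_Mseq_0[of x s t] x xs st by simp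
  have "norm (kernel_sum x R)
      \<le> norm (\<Sum>u<V. psi m (u * Mseq m t) x) * norm (kernel_sum x (Mseq m t)) + norm (kernel_sum x U)"
    unfolding R_eq kernel_sum_shift[OF D0 U]
    using norm_triangle_ineq[of "(\<Sum>u<V. psi m (u * Mseq m t) x) * kernel_sum x (Mseq m t)"
        "psi m (V * Mseq m t) x * kernel_sum x U"]
    by (simp add: norm_mult norm_psi)
  also have "\<dots> \<le> real B * (Mseq m t * Mseq m (Suc s)) + Mseq m t * Mseq m (Suc s)"
  proof (intro add_mono mult_mono)
    show "norm (\<Sum>u<V. psi m (u * Mseq m t) x) \<le> real B"
      using psi_multiples_sum_bound[OF x xt, of V] B[rule_format, of t] by linarith
    show "norm (kernel_sum x (Mseq m t)) \<le> Mseq m t * Mseq m (Suc s)"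
      using kernel_sum_trivial_bound[OF x xs, of "Mseq m t"] by simp
    show "norm (kernel_sum x U) \<le> Mseq m t * Mseq m (Suc s)"
      using kernel_sum_trivial_bound[OF x xs, of U] U
        mult_right_mono[of "real U" "real (Mseq m t)" "real (Mseq m (Suc s))"] by simp
  qed simp_all
  also have "\<dots> = (real B + 1) * Mseq m (Suc s) * Mseq m t" by (simp add: algebra_simps)
  finally show ?thesis .
qed

section \<open>The Haar measure of cylinder sets\<close>

abbreviation coordinate_measure :: "nat \<Rightarrow> nat measure" where
  "coordinate_measure k \<equiv> uniform_count_measure {..<m k}"

lemma coordinate_prob: "prob_space (coordinate_measure k)"
  by (rule prob_space_uniform_count_measure) (use m_pos[of k] in auto)

sublocale coordinates: product_prob_space coordinate_measure UNIV
  by (simp add: product_prob_space_def product_prob_space_axioms_def product_sigma_finite_def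
      coordinate_prob prob_space_imp_sigma_finite)

lemma Gm_prob: "prob_space (Gm_measure m)"
  unfolding Gm_measure_def by (rule coordinates.prob_space_axioms)

lemma space_Gm: "space (Gm_measure m) = PiE UNIV (\<lambda>k. {..<m k})"
  by (simp add: Gm_measure_def space_PiM space_uniform_count_measure)

lemma cylinder_eq_emb:
  "{y \<in> space (Gm_measure m). \<forall>i<t. y i \<in> X i}
    = prod_emb UNIV coordinate_measure {..<t} (PiE {..<t} (\<lambda>i. X i \<inter> {..<m i}))"
  by (auto simp: prod_emb_def space_Gm space_uniform_count_measure PiE_iff)

lemma cylinder_sets: "{y \<in> space (Gm_measure m). \<forall>i<t. y i \<in> X i} \<in> sets (Gm_measure m)"
  unfolding cylinder_eq_emb unfolding Gm_measure_def
  by (rule sets_PiM_I) (auto simp: sets_uniform_count_measure)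

lemma cylinder_measure:
  assumes "\<And>i. i < t \<Longrightarrow> X i \<subseteq> {..<m i}"
  shows "measure (Gm_measure m) {y \<in> space (Gm_measure m). \<forall>i<t. y i \<in> X i}
    = (\<Prod>i<t. real (card (X i)) / real (m i))"
proof -
  have box: "PiE {..<t} (\<lambda>i. X i \<inter> {..<m i}) = PiE {..<t} X"
    using assms by (intro PiE_cong) auto
  have "measure (Gm_measure m) {y \<in> space (Gm_measure m). \<forall>i<t. y i \<in> X i}
      = (\<Prod>i<t. measure (coordinate_measure i) (X i))"
    unfolding cylinder_eq_emb box unfolding Gm_measure_def
    by (rule coordinates.measure_PiM_emb) (use assms in \<open>auto simp: sets_uniform_count_measure\<close>)
  also have "\<dots> = (\<Prod>i<t. real (card (X i)) / real (m i))"
    using assms by (intro prod.cong refl) (simp add: measure_uniform_count_measure)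
  finally show ?thesis .
qed

lemma I_set_eq_cylinder: "I_set m N = {y \<in> space (Gm_measure m). \<forall>i<N. y i \<in> {0}}"
  by (simp add: I_set_def)

lemma I_set_sets: "I_set m N \<in> sets (Gm_measure m)"
  unfolding I_set_eq_cylinder by (rule cylinder_sets)

lemma I_set_measure: "measure (Gm_measure m) (I_set m N) = 1 / real (Mseq m N)"
proof -
  have "measure (Gm_measure m) (I_set m N) = (\<Prod>i<N. real (card {0::nat}) / real (m i))"
    unfolding I_set_eq_cylinder by (rule cylinder_measure) (simp add: m_pos)
  then show ?thesis by (simp add: Mseq_def prod_dividef)
qed

definition shell :: "nat \<Rightarrow> nat \<Rightarrow> (nat \<Rightarrow> nat) set" where
  "shell s t = {y \<in> space (Gm_measure m). \<forall>i<t. y i \<in> (if i = s then {..<m s} else {0})}"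

lemma shell_sets: "shell s t \<in> sets (Gm_measure m)"
  unfolding shell_def by (rule cylinder_sets)

lemma shell_measure:
  assumes "s < t"
  shows "measure (Gm_measure m) (shell s t) = real (m s) / real (Mseq m t)"
proof -
  have "measure (Gm_measure m) (shell s t)
      = (\<Prod>i<t. real (card (if i = s then {..<m s} else {0::nat})) / real (m i))"
    unfolding shell_def by (rule cylinder_measure) (simp add: m_pos)
  also have "\<dots> = (\<Prod>i<t. (1 / real (m i)) * (if i = s then real (m s) else 1))"
    by (intro prod.cong refl) simp
  also have "\<dots> = (\<Prod>i<t. 1 / real (m i)) * (\<Prod>i<t. if i = s then real (m s) else 1)"
    by (rule prod.distrib)
  also have "\<dots> = real (m s) / real (Mseq m t)"
    using assms by (simp add: prod.delta Mseq_def prod_dividef)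
  finally show ?thesis .
qed

section \<open>Fourier coefficients and Fej\'er means of atoms\<close>

definition atom :: "real \<Rightarrow> nat \<Rightarrow> ((nat \<Rightarrow> nat) \<Rightarrow> complex) \<Rightarrow> bool" where
  "atom p N a \<longleftrightarrow>
     a \<in> borel_measurable (Gm_measure m)
     \<and> (\<forall>x \<in> space (Gm_measure m) - I_set m N. a x = 0)
     \<and> (LINT x:I_set m N|Gm_measure m. a x) = 0
     \<and> (\<forall>x \<in> space (Gm_measure m). norm (a x) \<le> real (Mseq m N) powr (1/p))"

text \<open>Since \<open>\<psi>_r = 1\<close> on \<open>I_N\<close> for \<open>r < M_N\<close>, the coefficients of an atom are constant on
  the blocks \<open>[q M_N, (q+1) M_N)\<close>.\<close>

lemma fourier_atom_block:
  assumes "atom p N a"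
  shows "fourier m a j = fourier m a (j div Mseq m N * Mseq m N)"
  unfolding fourier_def
proof (rule Bochner_Integration.integral_cong[OF refl])
  fix y assume y: "y \<in> space (Gm_measure m)"
  show "a y * cnj (psi m j y) = a y * cnj (psi m (j div Mseq m N * Mseq m N) y)"
  proof (cases "y \<in> I_set m N")
    case True
    have r: "j mod Mseq m N < Mseq m N" using Mseq_pos[of N] by simp
    have "psi m j y = psi m (j div Mseq m N * Mseq m N + j mod Mseq m N) y" by (metis div_mult_mod_eq)
    also have "\<dots> = psi m (j div Mseq m N * Mseq m N) y"
      using psi_add[OF r] psi_eq_1[OF r] True by (simp add: I_set_def)
    finally show ?thesis by simp
  next
    case False
    then show ?thesis using assms y by (simp add: atom_def)
  qed
qed

lemma fourier_atom_0:
  assumes "atom p N a"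
  shows "fourier m a 0 = 0"
proof -
  have "fourier m a 0 = (LINT x:I_set m N|Gm_measure m. a x)"
    unfolding fourier_def set_lebesgue_integral_def
    by (rule Bochner_Integration.integral_cong[OF refl])
      (use assms in \<open>auto simp: atom_def psi_0 indicator_def\<close>)
  then show ?thesis using assms by (simp add: atom_def)
qed

lemma fourier_atom_bound:
  assumes "atom p N a"
  shows "norm (fourier m a j) \<le> real (Mseq m N) powr (1/p) / real (Mseq m N)"
proof -
  interpret prob_space "Gm_measure m" by (rule Gm_prob)
  define C where "C = real (Mseq m N) powr (1/p)"
  have meas: "a \<in> borel_measurable (Gm_measure m)"
    and norm_le: "\<And>x. x \<in> space (Gm_measure m) \<Longrightarrow> norm (a x) \<le> C"
    and bound: "\<And>x. x \<in> space (Gm_measure m) \<Longrightarrow> norm (a x) \<le> C * indicator (I_set m N) x"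
    using assms by (auto simp: atom_def C_def indicator_def)
  have "norm (fourier m a j) \<le> (\<integral>x. norm (a x * cnj (psi m j x)) \<partial>Gm_measure m)"
    unfolding fourier_def by (rule integral_norm_bound)
  also have "\<dots> = (\<integral>x. norm (a x) \<partial>Gm_measure m)"
    by (simp add: norm_mult norm_psi)
  also have "\<dots> \<le> (\<integral>x. C * indicator (I_set m N) x \<partial>Gm_measure m)"
  proof (rule integral_mono)
    show "integrable (Gm_measure m) (\<lambda>x. norm (a x))"
      by (rule integrable_const_bound[where B = C]) (use meas norm_le in auto)
    show "integrable (Gm_measure m) (\<lambda>x. C * indicator (I_set m N) x)"
      by (rule integrable_const_bound[where B = "\<bar>C\<bar>"])
        (use I_set_sets in \<open>auto simp: indicator_def\<close>)
  qed (use bound in simp)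
  also have "\<dots> = C / real (Mseq m N)"
    using I_set_sets by (simp add: I_set_measure)
  finally show ?thesis by (simp add: C_def)
qed

lemma partial_sum_atom:
  assumes a: "atom p N a" and x: "\<forall>i. x i < m i" and i: "i < N" "x i \<noteq> 0"
  shows "partial_sum m a k x
    = fourier m a (k div Mseq m N * Mseq m N) * psi m (k div Mseq m N * Mseq m N) x
      * dirichlet x (k mod Mseq m N)"
proof -
  define M where "M = Mseq m N"
  define f where "f j = fourier m a j * psi m j x" for j
  have f_block: "f (q * M + r) = f (q * M) * psi m r x" if "r < M" for q r
    using that fourier_atom_block[OF a, of "q * M + r"] fourier_atom_block[OF a, of "q * M"]
      psi_add[of r N q x] Mseq_pos[of N] by (simp add: f_def M_def)
  have M: "0 < M" by (simp add: M_def Mseq_pos)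
  have "partial_sum m a k x
      = (\<Sum>q<k div M. f (q * M) * dirichlet x M) + f (k div M * M) * dirichlet x (k mod M)"
    unfolding partial_sum_def f_def[symmetric] sum_lessThan_div_mod[of _ k M] dirichlet_def
      sum_distrib_left
    by (intro arg_cong2[where f = "(+)"] sum.cong refl)
      (simp_all add: f_block order.strict_trans[OF _ mod_less_divisor[OF M]])
  also have "dirichlet x M = 0" unfolding M_def by (rule dirichlet_Mseq_0[OF x i])
  finally show ?thesis by (simp add: f_def M_def)
qed

lemma fejer_numerator_bound:
  assumes a: "atom p N a" and x: "\<forall>i. x i < m i" and i: "i < N" "x i \<noteq> 0"
    and G: "\<And>R. R \<le> Mseq m N \<Longrightarrow> norm (kernel_sum x R) \<le> G"
  defines "A \<equiv> real (Mseq m N) powr (1/p) / real (Mseq m N)"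
  shows "norm (\<Sum>k<n. partial_sum m a k x)
    \<le> (if n < Mseq m N then 0 else (real (n div Mseq m N) + 1) * A * G)"
proof -
  define M where "M = Mseq m N"
  have M: "0 < M" by (simp add: M_def Mseq_pos)
  define \<beta> where "\<beta> q = fourier m a (q * M) * psi m (q * M) x" for q
  have \<beta>: "norm (\<beta> q) \<le> A" for q
    unfolding \<beta>_def A_def M_def by (simp add: norm_mult norm_psi fourier_atom_bound[OF a])
  have "(\<Sum>k<n. partial_sum m a k x) = (\<Sum>k<n. \<beta> (k div M) * dirichlet x (k mod M))"
    using partial_sum_atom[OF a x i] by (simp add: \<beta>_def M_def)
  also have "\<dots> = (\<Sum>q<n div M. \<beta> q * kernel_sum x M) + \<beta> (n div M) * kernel_sum x (n mod M)"
    unfolding sum_lessThan_div_mod[of _ n M] kernel_sum_def sum_distrib_left using M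
    by (intro arg_cong2[where f = "(+)"] sum.cong refl)
      (simp_all add: order.strict_trans[OF _ mod_less_divisor[OF M]])
  finally have sum_eq: "(\<Sum>k<n. partial_sum m a k x)
      = (\<Sum>q<n div M. \<beta> q * kernel_sum x M) + \<beta> (n div M) * kernel_sum x (n mod M)" .
  have term_bound: "norm (\<beta> q * kernel_sum x R) \<le> A * G" if "R \<le> M" for q R
    unfolding norm_mult using \<beta> G[of R] that
    by (intro mult_mono) (auto simp: M_def intro: order_trans[OF norm_ge_zero])
  show ?thesis
  proof (cases "n < M")
    case True
    then show ?thesis
      using sum_eq fourier_atom_0[OF a] by (simp add: \<beta>_def M_def)
  next
    case False
    have "norm (\<Sum>k<n. partial_sum m a k x)
        \<le> (\<Sum>q<n div M. norm (\<beta> q * kernel_sum x M)) + norm (\<beta> (n div M) * kernel_sum x (n mod M))"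
      unfolding sum_eq by (intro norm_triangle_le add_mono norm_sum order_refl)
    also have "\<dots> \<le> (\<Sum>q<n div M. A * G) + A * G"
      using M by (intro add_mono sum_mono term_bound) simp_all
    finally show ?thesis using False by (simp add: M_def algebra_simps)
  qed
qed

text \<open>Dividing by \<open>n\<close> and by \<open>(n+1)^(1/p-2) \<ge> M_N^(1/p-2)\<close> exactly cancels the size
  \<open>M_N^(1/p-1)\<close> of the coefficients: the normalized Fej\'er means are at most \<open>2 G\<close>.\<close>

lemma fejer_ratio_bound:
  assumes a: "atom p N a" and x: "\<forall>i. x i < m i" and i: "i < N" "x i \<noteq> 0"
    and G: "\<And>R. R \<le> Mseq m N \<Longrightarrow> norm (kernel_sum x R) \<le> G"
    and p: "0 < p" "p < 1/2"
  shows "norm (fejer m a n x) / real (n+1) powr (1/p - 2) \<le> 2 * G"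
proof -
  define M where "M = real (Mseq m N)"
  define A where "A = M powr (1/p) / M"
  define e where "e = 1/p - 2"
  have e: "0 < e" using p by (simp add: e_def field_simps)
  have M: "1 \<le> M" using Mseq_pos[of N] by (simp add: M_def)
  have G0: "0 \<le> G" using G[of 0] norm_ge_zero order_trans by blast
  have A0: "0 \<le> A" using M by (simp add: A_def)
  define S where "S = norm (\<Sum>k<n. partial_sum m a k x)"
  have S: "S \<le> (if n < Mseq m N then 0 else (real (n div Mseq m N) + 1) * A * G)"
    unfolding S_def A_def M_def by (rule fejer_numerator_bound[OF a x i G])
  have fejer_eq: "norm (fejer m a n x) = S / real n"
    by (simp add: fejer_def S_def norm_divide)
  show ?thesis
  proof (cases "n < Mseq m N")
    case True
    then show ?thesis using S fejer_eq G0 by (simp add: S_def)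
  next
    case False
    define Q where "Q = n div Mseq m N"
    have n: "M \<le> real n" "0 < real n" using False Mseq_pos[of N] by (simp_all add: M_def)
    have "real Q * M \<le> real n"
      unfolding Q_def M_def by (metis of_nat_le_iff of_nat_mult div_times_less_eq_dividend)
    then have QM: "(real Q + 1) * M \<le> 2 * real n" using n by (simp add: algebra_simps)
    have "norm (fejer m a n x) \<le> (real Q + 1) * A * G / real n"
      using S False n unfolding fejer_eq by (intro divide_right_mono) (simp_all add: Q_def)
    also have "\<dots> \<le> 2 * A * G / M"
      using mult_right_mono[OF QM, of "A * G"] A0 G0 n M by (simp add: field_simps)
    finally have fejer_le: "norm (fejer m a n x) \<le> 2 * A * G / M" .
    have "M powr e \<le> real (n+1) powr e" using n e M by (intro powr_mono2) simp_all
    then have "norm (fejer m a n x) / real (n+1) powr e \<le> (2 * A * G / M) / M powr e"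
      using fejer_le A0 G0 M by (intro frac_le) simp_all
    also have "(2 * A * G / M) / M powr e = 2 * G"
    proof -
      have "M powr (1/p) = M powr e * M powr 2" unfolding e_def powr_add[symmetric] by simp
      then have "M powr (1/p) = M powr e * (M * M)" using M by (simp add: power2_eq_square)
      then show ?thesis using M by (simp add: A_def field_simps)
    qed
    finally show ?thesis by (simp add: e_def)
  qed
qed

section \<open>The estimate outside \<open>I_N\<close>\<close>

lemma outside_I_set_shell:
  assumes x: "x \<in> space (Gm_measure m) - I_set m N"
  obtains s t where "s < t" "t \<le> N" "x s \<noteq> 0" "t = N \<or> x t \<noteq> 0" "x \<in> shell s t"
proof -
  obtain i where i: "i < N" "x i \<noteq> 0" using x by (auto simp: I_set_def)
  define s where "s = (LEAST i. x i \<noteq> 0)"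
  have xs: "x s \<noteq> 0" unfolding s_def by (rule LeastI[of _ i]) (rule i(2))
  have sN: "s < N" using Least_le[of "\<lambda>i. x i \<noteq> 0" i] i by (simp add: s_def)
  have below: "x j = 0" if "j < s" for j using not_less_Least[OF that[unfolded s_def]] by simp
  define t where "t = (LEAST j. s < j \<and> (j = N \<or> x j \<noteq> 0))"
  have t: "s < t \<and> (t = N \<or> x t \<noteq> 0)" unfolding t_def by (rule LeastI[of _ N]) (use sN in simp)
  have tN: "t \<le> N" unfolding t_def by (rule Least_le) (use sN in simp)
  have between: "x j = 0" if "s < j" "j < t" for j
    using not_less_Least[OF that(2)[unfolded t_def]] that tN by auto
  have "x \<in> shell s t"
    using x below between by (auto simp: shell_def space_Gm PiE_iff linorder_neq_iff)
  then show ?thesis using that t tN xs by blast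
qed

lemma maximal_bound_on_shell:
  assumes a: "atom p N a" and p: "0 < p" "p < 1/2" and B: "\<forall>k. m k \<le> B"
    and x: "x \<in> space (Gm_measure m)"
    and st: "s < t" "t \<le> N" "x s \<noteq> 0" "t = N \<or> x t \<noteq> 0"
  shows "norm (fejer m a n x) / real (n+1) powr (1/p - 2)
    \<le> 2 * ((real B + 1) * Mseq m (Suc s) * Mseq m t)"
proof (rule fejer_ratio_bound[OF a _ _ _ _ p])
  show x': "\<forall>i. x i < m i" using x by (auto simp: space_Gm PiE_iff)
  show "norm (kernel_sum x R) \<le> (real B + 1) * Mseq m (Suc s) * Mseq m t" if "R \<le> Mseq m N" for R
    by (rule kernel_sum_bound[OF x' B st that])
qed (use st in auto)

definition shell_weight :: "nat \<Rightarrow> real \<Rightarrow> nat \<Rightarrow> nat \<Rightarrow> real" where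
  "shell_weight B p s t = (2 * ((real B + 1) * Mseq m (Suc s) * Mseq m t)) powr p"

lemma maximal_function_le_shells:
  assumes a: "atom p N a" and p: "0 < p" "p < 1/2" and B: "\<forall>k. m k \<le> B"
    and x: "x \<in> space (Gm_measure m)"
  shows "ennpowr (\<Squnion>n\<in>{1..}. ennreal (norm (fejer m a n x) / real (n+1) powr (1/p - 2))) p
           * indicator (space (Gm_measure m) - I_set m N) x
       \<le> (\<Sum>t\<le>N. \<Sum>s<t. ennreal (shell_weight B p s t) * indicator (shell s t) x)"
proof (cases "x \<in> I_set m N")
  case False
  with x obtain s t where st: "s < t" "t \<le> N" "x s \<noteq> 0" "t = N \<or> x t \<noteq> 0" "x \<in> shell s t"
    using outside_I_set_shell by blast
  define G where "G = (real B + 1) * Mseq m (Suc s) * Mseq m t"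
  have "(\<Squnion>n\<in>{1..}. ennreal (norm (fejer m a n x) / real (n+1) powr (1/p - 2))) \<le> ennreal (2 * G)"
    unfolding G_def using maximal_bound_on_shell[OF a p B x st(1-4)]
    by (intro SUP_least ennreal_leI)
  then have "ennpowr (\<Squnion>n\<in>{1..}. ennreal (norm (fejer m a n x) / real (n+1) powr (1/p - 2))) p
      \<le> ennreal (shell_weight B p s t) * indicator (shell s t) x"
    using ennpowr_le[of _ "2 * G" p] p st(5) by (simp add: G_def shell_weight_def)
  also have "\<dots> \<le> (\<Sum>s'<t. ennreal (shell_weight B p s' t) * indicator (shell s' t) x)"
    by (rule member_le_sum) (use st in auto)
  also have "\<dots> \<le> (\<Sum>t'\<le>N. \<Sum>s'<t'. ennreal (shell_weight B p s' t') * indicator (shell s' t') x)"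
    by (rule member_le_sum[where i = t]) (use st in auto)
  finally show ?thesis using False x by simp
qed simp

text \<open>Each shell contributes at most \<open>(2(B+1))^p B r^t\<close> with \<open>r = 2^(2p-1) < 1\<close>, because
  \<open>M_(s+1) \<le> M_t\<close>, \<open>m_s \<le> B\<close> and \<open>M_t \<ge> 2^t\<close>.\<close>

lemma shell_contribution_bound:
  assumes B: "\<forall>k. m k \<le> B" and p: "0 < p" "p < 1/2" and st: "s < t"
  shows "shell_weight B p s t * (real (m s) / real (Mseq m t))
    \<le> (2 * (real B + 1)) powr p * real B * (2 powr (2 * p - 1)) ^ t"
proof -
  define Mt where "Mt = real (Mseq m t)"
  define C where "C = 2 * (real B + 1)"
  have Mt: "1 \<le> Mt" using Mseq_pos[of t] by (simp add: Mt_def)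
  have C: "0 \<le> C" by (simp add: C_def)
  have "shell_weight B p s t \<le> (C * (Mt * Mt)) powr p"
  proof -
    have "real (Mseq m (Suc s)) \<le> Mt" using Mseq_mono[of "Suc s" t] st by (simp add: Mt_def)
    then have "real (Mseq m (Suc s)) * Mt \<le> Mt * Mt" using Mt by (intro mult_right_mono) auto
    from mult_left_mono[OF this C]
    have "2 * ((real B + 1) * Mseq m (Suc s) * Mseq m t) \<le> C * (Mt * Mt)"
      by (simp add: Mt_def C_def algebra_simps)
    then show ?thesis
      unfolding shell_weight_def using p by (intro powr_mono2) simp_all
  qed
  also have "\<dots> = C powr p * Mt powr (2 * p)"
    using Mt C by (simp add: powr_mult powr_add[symmetric])
  finally have weight: "shell_weight B p s t \<le> C powr p * Mt powr (2 * p)" .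
  have "shell_weight B p s t * (real (m s) / real (Mseq m t)) \<le> C powr p * Mt powr (2 * p) * (real B / Mt)"
  proof (rule mult_mono[OF weight])
    show "real (m s) / real (Mseq m t) \<le> real B / Mt"
      unfolding Mt_def using B Mt by (intro divide_right_mono) simp_all
  qed (use Mt in simp_all)
  also have "\<dots> = C powr p * real B * Mt powr (2 * p - 1)"
    using Mt by (simp add: powr_diff field_simps)
  also have "\<dots> \<le> C powr p * real B * (2 powr (2 * p - 1)) ^ t"
  proof (intro mult_left_mono)
    have "Mt powr (2 * p - 1) \<le> (2 ^ t) powr (2 * p - 1)"
      using p two_pow_le_Mseq[of t] by (intro powr_mono2') (auto simp: Mt_def)
    also have "\<dots> = (2 powr (2 * p - 1)) ^ t"
      by (simp add: powr_realpow[symmetric] powr_powr mult.commute)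
    finally show "Mt powr (2 * p - 1) \<le> (2 powr (2 * p - 1)) ^ t" .
  qed simp_all
  finally show ?thesis by (simp add: C_def)
qed

lemma atom_maximal_integral_bound:
  assumes a: "atom p N a" and p: "0 < p" "p < 1/2" and B: "\<forall>k. m k \<le> B"
  defines "r \<equiv> 2 powr (2 * p - 1)"
  shows "(\<integral>\<^sup>+ x \<in> space (Gm_measure m) - I_set m N.
            ennpowr (\<Squnion>n\<in>{1..}. ennreal (norm (fejer m a n x) / real (n+1) powr (1/p - 2))) p
          \<partial>Gm_measure m)
    \<le> ennreal ((2 * (real B + 1)) powr p * real B * (\<Sum>t. real t * r ^ t))"
proof -
  interpret prob_space "Gm_measure m" by (rule Gm_prob)
  define K where "K = (2 * (real B + 1)) powr p * real B"
  have r: "0 \<le> r" "r < 1"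
    using powr_less_mono[of "2 * p - 1" 0 2] p by (simp_all add: r_def)
  have [measurable]: "shell s t \<in> sets (Gm_measure m)" for s t by (rule shell_sets)
  have "(\<integral>\<^sup>+ x \<in> space (Gm_measure m) - I_set m N.
            ennpowr (\<Squnion>n\<in>{1..}. ennreal (norm (fejer m a n x) / real (n+1) powr (1/p - 2))) p
          \<partial>Gm_measure m)
      \<le> (\<integral>\<^sup>+ x. (\<Sum>t\<le>N. \<Sum>s<t. ennreal (shell_weight B p s t) * indicator (shell s t) x) \<partial>Gm_measure m)"
    by (intro nn_integral_mono maximal_function_le_shells[OF a p B])
  also have "\<dots> = (\<Sum>t\<le>N. \<integral>\<^sup>+ x. (\<Sum>s<t. ennreal (shell_weight B p s t) * indicator (shell s t) x)
      \<partial>Gm_measure m)"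
    by (rule nn_integral_sum) measurable
  also have "\<dots> = (\<Sum>t\<le>N. \<Sum>s<t. \<integral>\<^sup>+ x. ennreal (shell_weight B p s t) * indicator (shell s t) x
      \<partial>Gm_measure m)"
    by (intro sum.cong refl nn_integral_sum) measurable
  also have "\<dots> = (\<Sum>t\<le>N. \<Sum>s<t. ennreal (shell_weight B p s t) * emeasure (Gm_measure m) (shell s t))"
    by (intro sum.cong refl nn_integral_cmult_indicator shell_sets)
  also have "\<dots> = ennreal (\<Sum>t\<le>N. \<Sum>s<t. shell_weight B p s t * (real (m s) / real (Mseq m t)))"
    by (simp add: emeasure_eq_measure shell_measure sum_nonneg shell_weight_def
        flip: ennreal_mult sum_ennreal)
  also have "\<dots> \<le> ennreal (K * (\<Sum>t. real t * r ^ t))"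
  proof (rule ennreal_leI)
    have "(\<Sum>t\<le>N. \<Sum>s<t. shell_weight B p s t * (real (m s) / real (Mseq m t)))
        \<le> (\<Sum>t\<le>N. \<Sum>s<t. K * r ^ t)"
      unfolding K_def r_def by (intro sum_mono shell_contribution_bound[OF B p]) auto
    also have "\<dots> = K * (\<Sum>t<Suc N. real t * r ^ t)"
      by (simp add: sum_distrib_left lessThan_Suc_atMost mult_ac)
    also have "\<dots> \<le> K * (\<Sum>t. real t * r ^ t)"
      using r by (intro mult_left_mono sum_le_suminf summable_times_geometric) (auto simp: K_def)
    finally show "(\<Sum>t\<le>N. \<Sum>s<t. shell_weight B p s t * (real (m s) / real (Mseq m t)))
        \<le> K * (\<Sum>t. real t * r ^ t)" .
  qed
  finally show ?thesis by (simp add: K_def)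
qed

end

theorem mainTheorem4:
  fixes p :: real and m :: "nat \<Rightarrow> nat"
  assumes "0 < p" and "p < 1/2"
    and "\<And>k. 2 \<le> m k"
    and "\<exists>B. \<forall>k. m k \<le> B"
  shows "\<exists>c::real. \<forall>(N::nat) (a :: (nat \<Rightarrow> nat) \<Rightarrow> complex).
     a \<in> borel_measurable (Gm_measure m)
     \<and> (\<forall>x \<in> space (Gm_measure m) - I_set m N. a x = 0)
     \<and> (LINT x:I_set m N|Gm_measure m. a x) = 0
     \<and> (\<forall>x \<in> space (Gm_measure m). norm (a x) \<le> real (Mseq m N) powr (1/p))
     \<longrightarrow> (\<integral>\<^sup>+ x \<in> space (Gm_measure m) - I_set m N.
            ennpowr (\<Squnion>n\<in>{1..}. ennreal (norm (fejer m a n x) / real (n+1) powr (1/p - 2))) p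
          \<partial>Gm_measure m) \<le> ennreal c"
proof -
  obtain B where B: "\<forall>k. m k \<le> B" using assms(4) by blast
  interpret vilenkin m by unfold_locales (rule assms(3))
  show ?thesis
    using atom_maximal_integral_bound[OF _ assms(1,2) B] unfolding atom_def by blast
qed

end
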